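(* Assume: (1) there exists an $\mathcal{A}'$-linear map $\varphi_1:C^1_{\mathrm{CE,der}}(\mathcal{A},\mathcal{B})\to C^0_{\mathrm{CE,der}}(\mathcal{A},\mathcal{B})=\mathcal{B}$ such that every $D$ with $\delta D=0$ satisfies $D=\delta\varphi_1(D)$; and (2) there is an $\mathcal{A}'$-linear map $C^1_{\mathrm{CE,der}}(\mathcal{A}',\mathcal{B})\to\mathrm{Der}(\mathcal{B})$, $D\mapsto D^h$, with $D^h(\phi_0'(a'))=D(a')$ for all $a'\in\mathcal{A}'$. Then there exists $X'\in\lambda\mathrm{Der}(\mathcal{B})[[\lambda]]$ such that $\exp(X')\phi_0'(\mathcal{A}'[[\lambda]])\subseteq C$, i.e. $\sigma(\exp(X')\phi_0'(a'),\Phi(a))=0$ for all $a\in\mathcal{A}$, $a'\in\mathcal{A}'$.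
   Context: $\mathbb{K}$ is a field of characteristic zero. $\mathcal{A},\mathcal{B}$ are commutative $\mathbb{K}$-algebras with Poisson brackets $\pi_0=\{\cdot,\cdot\}_{\mathcal{A}}$, $\sigma_0=\{\cdot,\cdot\}_{\mathcal{B}}$; $\phi_0:\mathcal{A}\to\mathcal{B}$ is a Poisson morphism. $\pi,\sigma$ are formal Poisson deformations of $\pi_0,\sigma_0$ ($\mathbb{K}[[\lambda]]$-bilinear Poisson brackets on $\mathcal{A}[[\lambda]],\mathcal{B}[[\lambda]]$ with these zeroth-order terms), and $\Phi:(\mathcal{A}[[\lambda]],\pi)\to(\mathcal{B}[[\lambda]],\sigma)$ is a $\mathbb{K}[[\lambda]]$-linear Poisson morphism with zeroth-order term $\phi_0$. $\mathcal{A}'$ is the Poisson commutant of $\phi_0(\mathcal{A})$ in $(\mathcal{B},\sigma_0)$ and $\phi_0':\mathcal{A}'\to\mathcal{B}$ the inclusion; $C$ is the commutant of $\Phi(\mathcal{A}[[\lambda]])$ in $(\mathcal{B}[[\lambda]],\sigma)$. $\exp(X')=\sum_n(X')^n/n!$. Chevalley–Eilenberg complex (undeformed brackets): $C^0_{\mathrm{CE}}(\mathcal{A},\mathcal{B})=\mathcal{B}$, $C^k_{\mathrm{CE}}$ = $k$-linear antisymmetric maps $\mathcal{A}^k\to\mathcal{B}$, $(\delta D)(a_0,\dots,a_k)=\sum_j(-1)^j\{\phi_0(a_j),D(\dots,\widehat{a_j},\dots)\}_{\mathcal{B}}+\sum_{i<j}(-1)^{i+j}D(\{a_i,a_j\}_{\mathcal{A}},\dots,\widehat{a_i},\dots,\widehat{a_j},\dots)$;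 in particular $(\delta b)(a)=\{\phi_0(a),b\}_{\mathcal{B}}$ for $b\in\mathcal{B}$. $C^\bullet_{\mathrm{CE,der}}(\mathcal{A},\mathcal{B})$ is the subcomplex of cochains that are derivations along $\phi_0$ in each argument. $C^1_{\mathrm{CE,der}}(\mathcal{A}',\mathcal{B})$ is the space of linear maps $D:\mathcal{A}'\to\mathcal{B}$ with $D(a'_1a'_2)=\phi_0'(a'_1)D(a'_2)+\phi_0'(a'_2)D(a'_1)$. $\mathcal{A}'$ acts on these spaces and on $\mathcal{B}$ by multiplication by $\phi_0'(a')$ in $\mathcal{B}$. *)

theory Defs
  imports "HOL-Computational_Algebra.Formal_Power_Series"
begin

definition k_algebra :: "('k::comm_ring_1 \<Rightarrow> 'a::comm_ring_1 \<Rightarrow> 'a) \<Rightarrow> bool" where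
  "k_algebra sm \<longleftrightarrow>
     (\<forall>c x y. sm c (x + y) = sm c x + sm c y) \<and>
     (\<forall>c d x. sm (c + d) x = sm c x + sm d x) \<and>
     (\<forall>c d x. sm (c * d) x = sm c (sm d x)) \<and>
     (\<forall>x. sm 1 x = x) \<and>
     (\<forall>c x y. sm c (x * y) = sm c x * y)"

definition k_linear ::
  "('k \<Rightarrow> 'a::ab_group_add \<Rightarrow> 'a) \<Rightarrow> ('k \<Rightarrow> 'b::ab_group_add \<Rightarrow> 'b) \<Rightarrow> ('a \<Rightarrow> 'b) \<Rightarrow> bool" where
  "k_linear smA smB f \<longleftrightarrow>
     (\<forall>x y. f (x + y) = f x + f y) \<and> (\<forall>c x. f (smA c x) = smB c (f x))"

definition k_bilinear :: "('k \<Rightarrow> 'a::ab_group_add \<Rightarrow> 'a) \<Rightarrow> ('a \<Rightarrow> 'a \<Rightarrow> 'a) \<Rightarrow> bool" where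
  "k_bilinear sm br \<longleftrightarrow> (\<forall>x. k_linear sm sm (br x)) \<and> (\<forall>y. k_linear sm sm (\<lambda>x. br x y))"

definition poisson_bracket :: "('k \<Rightarrow> 'a::comm_ring_1 \<Rightarrow> 'a) \<Rightarrow> ('a \<Rightarrow> 'a \<Rightarrow> 'a) \<Rightarrow> bool" where
  "poisson_bracket sm br \<longleftrightarrow>
     k_bilinear sm br \<and>
     (\<forall>x y. br x y = - br y x) \<and>
     (\<forall>x y z. br x (br y z) + br y (br z x) + br z (br x y) = 0) \<and>
     (\<forall>x y z. br x (y * z) = br x y * z + y * br x z)"

definition poisson_morphism ::
  "('k \<Rightarrow> 'a::comm_ring_1 \<Rightarrow> 'a) \<Rightarrow> ('k \<Rightarrow> 'b::comm_ring_1 \<Rightarrow> 'b) \<Rightarrow>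
   ('a \<Rightarrow> 'a \<Rightarrow> 'a) \<Rightarrow> ('b \<Rightarrow> 'b \<Rightarrow> 'b) \<Rightarrow> ('a \<Rightarrow> 'b) \<Rightarrow> bool" where
  "poisson_morphism smA smB brA brB f \<longleftrightarrow>
     k_linear smA smB f \<and> f 1 = 1 \<and>
     (\<forall>x y. f (x * y) = f x * f y) \<and>
     (\<forall>x y. f (brA x y) = brB (f x) (f y))"

definition derivation :: "('k \<Rightarrow> 'b::comm_ring_1 \<Rightarrow> 'b) \<Rightarrow> ('b \<Rightarrow> 'b) \<Rightarrow> bool" where
  "derivation sm X \<longleftrightarrow> k_linear sm sm X \<and> (\<forall>x y. X (x * y) = x * X y + y * X x)"

definition fps_sm :: "('k::comm_ring_1 \<Rightarrow> 'a::comm_ring_1 \<Rightarrow> 'a) \<Rightarrow> 'k fps \<Rightarrow> 'a fps \<Rightarrow> 'a fps" where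
  "fps_sm sm c f = Abs_fps (\<lambda>n. \<Sum>i\<le>n. sm (fps_nth c i) (fps_nth f (n - i)))"

definition poisson_commutant :: "('b \<Rightarrow> 'b \<Rightarrow> 'b::zero) \<Rightarrow> ('a \<Rightarrow> 'b) \<Rightarrow> 'b set" where
  "poisson_commutant brB \<phi> = {b. \<forall>a. brB (\<phi> a) b = 0}"

definition CE1_der ::
  "('k \<Rightarrow> 'a::comm_ring_1 \<Rightarrow> 'a) \<Rightarrow> ('k \<Rightarrow> 'b::comm_ring_1 \<Rightarrow> 'b) \<Rightarrow> ('a \<Rightarrow> 'b) \<Rightarrow> ('a \<Rightarrow> 'b) set" where
  "CE1_der smA smB \<phi> = {D. k_linear smA smB D \<and> (\<forall>x y. D (x * y) = \<phi> x * D y + \<phi> y * D x)}"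

text \<open>C^1_{CE,der}(A',B) for a subset A' of B (phi0' the inclusion). A map A' \<rightarrow> B is
  represented by a function on B vanishing outside A' (extensional convention).\<close>
definition CE1_der_sub :: "('k \<Rightarrow> 'b::comm_ring_1 \<Rightarrow> 'b) \<Rightarrow> 'b set \<Rightarrow> ('b \<Rightarrow> 'b) set" where
  "CE1_der_sub smB A' = {D.
     (\<forall>x\<in>A'. \<forall>y\<in>A'. D (x + y) = D x + D y) \<and>
     (\<forall>c. \<forall>x\<in>A'. D (smB c x) = smB c (D x)) \<and>
     (\<forall>x\<in>A'. \<forall>y\<in>A'. D (x * y) = x * D y + y * D x) \<and>
     (\<forall>x. x \<notin> A' \<longrightarrow> D x = 0)}"

definition ce_delta0 :: "('b \<Rightarrow> 'b \<Rightarrow> 'b) \<Rightarrow> ('a \<Rightarrow> 'b) \<Rightarrow> 'b \<Rightarrow> ('a \<Rightarrow> 'b)" where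
  "ce_delta0 brB \<phi> b = (\<lambda>a. brB (\<phi> a) b)"

definition ce_delta1 ::
  "('a \<Rightarrow> 'a \<Rightarrow> 'a) \<Rightarrow> ('b \<Rightarrow> 'b \<Rightarrow> 'b::ab_group_add) \<Rightarrow> ('a \<Rightarrow> 'b) \<Rightarrow> ('a \<Rightarrow> 'b) \<Rightarrow> ('a \<Rightarrow> 'a \<Rightarrow> 'b)" where
  "ce_delta1 brA brB \<phi> D = (\<lambda>a0 a1. brB (\<phi> a0) (D a1) - brB (\<phi> a1) (D a0) - D (brA a0 a1))"

text \<open>Action of a series of operators X = sum_k lambda^k X_k on B[[lambda]].\<close>
definition op_apply :: "(nat \<Rightarrow> 'b::comm_monoid_add \<Rightarrow> 'b) \<Rightarrow> 'b fps \<Rightarrow> 'b fps" where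
  "op_apply X f = Abs_fps (\<lambda>n. \<Sum>k\<le>n. X k (fps_nth f (n - k)))"

text \<open>exp(X') = sum_m X'^m / m!; when X_0 = 0, X'^m raises the lambda-order by m, so
  the lambda^n coefficient only receives contributions from m \<le> n.\<close>
definition op_exp :: "('k::field_char_0 \<Rightarrow> 'b \<Rightarrow> 'b::comm_ring_1) \<Rightarrow> (nat \<Rightarrow> 'b \<Rightarrow> 'b) \<Rightarrow> 'b fps \<Rightarrow> 'b fps" where
  "op_exp sm X f = Abs_fps (\<lambda>n. \<Sum>m\<le>n. sm (1 / fact m) (fps_nth (((op_apply X) ^^ m) f) n))"

end

theory Submission
  imports Defs
begin

text \<open>
  The generator \<open>X' = \<Sum>\<^sub>k \<lambda>\<^sup>k X\<^sub>k\<close> is built one order at a time. Suppose derivations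
  \<open>X\<^sub>1, \<dots>, X\<^sub>n\<close> have been found such that \<open>\<sigma>(exp(X') a', \<Phi>(a))\<close> vanishes up to order \<open>\<lambda>\<^sup>n\<close>
  for all \<open>a' \<in> A'\<close>. Its \<open>\<lambda>\<^sup>n\<^sup>+\<^sup>1\<close>-coefficient \<open>D\<^sub>a\<^sub>'(a)\<close> is then a derivation along \<open>\<phi>\<^sub>0\<close> in \<open>a\<close>
  and, by the Jacobi identity, a Chevalley--Eilenberg cocycle, so \<open>D\<^sub>a\<^sub>' = \<delta> \<phi>\<^sub>1(D\<^sub>a\<^sub>')\<close>.
  As \<open>exp(X')\<close> of derivations is multiplicative and \<open>\<phi>\<^sub>1\<close> is \<open>A'\<close>-linear, \<open>a' \<mapsto> \<phi>\<^sub>1(D\<^sub>a\<^sub>')\<close> is a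
  derivation \<open>A' \<rightarrow> B\<close>. Taking its horizontal lift as \<open>X\<^sub>n\<^sub>+\<^sub>1\<close> adds
  \<open>\<sigma>\<^sub>0(\<phi>\<^sub>1(D\<^sub>a\<^sub>'), \<phi>\<^sub>0(a))\<close> to the \<open>\<lambda>\<^sup>n\<^sup>+\<^sup>1\<close>-coefficient, which cancels \<open>D\<^sub>a\<^sub>'(a)\<close>.
  Finally, \<open>\<lambda>\<close>-linearity of \<open>\<sigma>\<close>, \<open>\<Phi>\<close> and \<open>exp(X')\<close> extends the commutation from
  \<open>A'\<close> and \<open>A\<close> to \<open>A'[[\<lambda>]]\<close> and \<open>A[[\<lambda>]]\<close>.
\<close>

unbundle fps_syntax

section \<open>Scalar multiplications and formal power series\<close>

lemma k_algebra_smult_zero_left: "k_algebra sm \<Longrightarrow> sm 0 x = 0"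
  unfolding k_algebra_def by (metis add_cancel_left_left)

lemma k_algebra_smult_zero_right: "k_algebra sm \<Longrightarrow> sm c 0 = 0"
  unfolding k_algebra_def by (metis add_cancel_left_left)

lemma k_algebra_smult_one: "k_algebra sm \<Longrightarrow> sm 1 x = x"
  unfolding k_algebra_def by blast

lemma k_algebra_smult_add_right: "k_algebra sm \<Longrightarrow> sm c (x + y) = sm c x + sm c y"
  and k_algebra_smult_add_left: "k_algebra sm \<Longrightarrow> sm (c + d) x = sm c x + sm d x"
  unfolding k_algebra_def by blast+

lemma k_algebra_smult_eq_mult: "k_algebra sm \<Longrightarrow> sm c x = sm c 1 * x"
  unfolding k_algebra_def by (metis mult_1)

lemma k_algebra_smult_mult_one: "k_algebra sm \<Longrightarrow> sm (c * d) 1 = sm c 1 * sm d 1"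
  by (metis k_algebra_smult_eq_mult k_algebra_def)

lemma k_algebra_smult_of_nat_one: "k_algebra sm \<Longrightarrow> sm (of_nat n) 1 = of_nat n"
  by (induction n) (simp_all add: k_algebra_smult_zero_left k_algebra_smult_add_left k_algebra_smult_one)

lemma k_algebra_smult_inverse_fact_binomial:
  fixes sm :: "'k::field_char_0 \<Rightarrow> 'b::comm_ring_1 \<Rightarrow> 'b"
  assumes "k_algebra sm" and "i \<le> m"
  shows "sm (1 / fact m) 1 * of_nat (m choose i) = sm (1 / fact i) 1 * sm (1 / fact (m - i)) 1"
proof -
  have "(1 / fact m :: 'k) * of_nat (m choose i) = (1 / fact i) * (1 / fact (m - i))"
    using assms(2) by (simp add: binomial_fact field_simps)
  then show ?thesis
    by (metis assms(1) k_algebra_smult_mult_one k_algebra_smult_of_nat_one)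
qed

lemma fps_sm_fps_X_power:
  assumes "k_algebra sm"
  shows "fps_sm sm (fps_X ^ N) H = fps_X ^ N * H"
proof (rule fps_ext)
  fix n
  have "fps_sm sm (fps_X ^ N) H $ n = (\<Sum>i\<le>n. if i = N then H $ (n - i) else 0)"
    unfolding fps_sm_def fps_nth_Abs_fps using assms
    by (intro sum.cong refl) (simp add: k_algebra_smult_zero_left k_algebra_smult_one)
  then show "fps_sm sm (fps_X ^ N) H $ n = (fps_X ^ N * H) $ n"
    by (simp add: fps_X_power_mult_nth sum.delta)
qed

lemma fps_sm_fps_const:
  assumes "k_algebra sm"
  shows "fps_sm sm (fps_const c) H = Abs_fps (\<lambda>n. sm c (H $ n))"
proof (rule fps_ext)
  fix n
  have "fps_sm sm (fps_const c) H $ n = (\<Sum>i\<le>n. if i = 0 then sm c (H $ (n - i)) else 0)"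
    unfolding fps_sm_def fps_nth_Abs_fps using assms
    by (intro sum.cong refl) (simp add: k_algebra_smult_zero_left)
  then show "fps_sm sm (fps_const c) H $ n = Abs_fps (\<lambda>n. sm c (H $ n)) $ n"
    by (simp add: sum.delta)
qed

lemma fps_eq_const_plus_X_mult_shift:
  "(f :: 'a::comm_ring_1 fps) = fps_const (f $ 0) + fps_X * fps_shift 1 f"
  by (rule fps_ext) simp

lemma fps_eq_X_power_mult_shift:
  "(\<And>k. k < N \<Longrightarrow> (f :: 'a::comm_ring_1 fps) $ k = 0) \<Longrightarrow> f = fps_X ^ N * fps_shift N f"
  by (rule fps_ext) (auto simp: fps_X_power_mult_nth)

lemma fps_mult_nth_eq_0:
  fixes f g :: "'a::comm_ring_1 fps"
  assumes "\<And>p. p < i \<Longrightarrow> f $ p = 0" "\<And>q. q < j \<Longrightarrow> g $ q = 0" "n < i + j"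
  shows "(f * g) $ n = 0"
proof -
  have "f $ p * g $ (n - p) = 0" if "p \<le> n" for p
    using assms that by (cases "p < i") auto
  then show ?thesis by (simp add: fps_mult_nth)
qed

lemma fps_mult_nth_Suc_eq_leading:
  fixes f g :: "'a::comm_ring_1 fps"
  assumes "\<And>k. k \<le> n \<Longrightarrow> f $ k = 0"
  shows "(f * g) $ Suc n = f $ Suc n * g $ 0"
proof -
  have "(f * g) $ Suc n = (\<Sum>i\<in>{Suc n}. f $ i * g $ (Suc n - i))"
    unfolding fps_mult_nth by (rule sum.mono_neutral_right) (use assms in auto)
  then show ?thesis by simp
qed

section \<open>Formal deformations of Poisson brackets\<close>

locale fps_poisson_deformation =
  fixes sm :: "'k::comm_ring_1 \<Rightarrow> 'b::comm_ring_1 \<Rightarrow> 'b"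
    and br :: "'b fps \<Rightarrow> 'b fps \<Rightarrow> 'b fps" and br0 :: "'b \<Rightarrow> 'b \<Rightarrow> 'b"
  assumes k_algebra: "k_algebra sm"
    and poisson: "poisson_bracket (fps_sm sm) br"
    and nth_0_const: "\<And>a b. br (fps_const a) (fps_const b) $ 0 = br0 a b"
begin

lemma add_right: "br F (G + H) = br F G + br F H"
  and add_left: "br (G + H) F = br G F + br H F"
  and smult_right: "br F (fps_sm sm c G) = fps_sm sm c (br F G)"
  and smult_left: "br (fps_sm sm c G) F = fps_sm sm c (br G F)"
  using poisson unfolding poisson_bracket_def k_bilinear_def k_linear_def by blast+

lemma antisym: "br F G = - br G F"
  and jacobi: "br F (br G H) + br G (br H F) + br H (br F G) = 0"
  and leibniz: "br F (G * H) = br F G * H + G * br F H"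
  using poisson unfolding poisson_bracket_def by blast+

lemma zero_right [simp]: "br F 0 = 0"
  using add_right[of F 0 0] by simp

lemma one_right [simp]: "br F 1 = 0"
  using leibniz[of F 1 1] by simp

lemma minus_right: "br F (- G) = - br F G"
proof -
  have "br F G + br F (- G) = 0"
    using add_right[of F G "- G"] by simp
  then show ?thesis
    by (metis minus_unique)
qed

lemma X_power_mult_right: "br F (fps_X ^ N * G) = fps_X ^ N * br F G"
  using smult_right[of F "fps_X ^ N" G] by (simp add: fps_sm_fps_X_power[OF k_algebra])

lemma X_power_mult_left: "br (fps_X ^ N * G) F = fps_X ^ N * br G F"
  using smult_left[of "fps_X ^ N" G F] by (simp add: fps_sm_fps_X_power[OF k_algebra])

lemma X_mult_right: "br F (fps_X * G) = fps_X * br F G"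
  using X_power_mult_right[of F 1 G] by simp

lemma X_mult_left: "br (fps_X * G) F = fps_X * br G F"
  using X_power_mult_left[of 1 G F] by simp

lemma nth_0: "br F G $ 0 = br0 (F $ 0) (G $ 0)"
proof -
  have "br F G = br (fps_const (F $ 0) + fps_X * fps_shift 1 F) (fps_const (G $ 0) + fps_X * fps_shift 1 G)"
    using fps_eq_const_plus_X_mult_shift[of F] fps_eq_const_plus_X_mult_shift[of G] by simp
  then show ?thesis by (simp add: add_left add_right X_mult_left X_mult_right nth_0_const)
qed

lemma br0_antisym: "br0 a b = - br0 b a"
  using antisym[of "fps_const a" "fps_const b"] by (simp flip: nth_0_const)

lemma nth_cong_left:
  assumes "\<And>j. j \<le> k \<Longrightarrow> F $ j = F' $ j"
  shows "br F G $ k = br F' G $ k"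
proof -
  have "F - F' = fps_X ^ Suc k * fps_shift (Suc k) (F - F')"
    by (rule fps_eq_X_power_mult_shift) (use assms in auto)
  then have "br (F - F') G $ k = 0"
    by (metis X_power_mult_left fps_X_power_mult_nth lessI not_less)
  moreover have "br F G = br F' G + br (F - F') G"
    using add_left[of F' "F - F'" G] by simp
  ultimately show ?thesis by simp
qed

lemma nth_leading_right:
  assumes "\<And>k. k < N \<Longrightarrow> G $ k = 0"
  shows "br F G $ N = br0 (F $ 0) (G $ N)"
proof -
  have "br F G = fps_X ^ N * br F (fps_shift N G)"
    by (metis assms X_power_mult_right fps_eq_X_power_mult_shift)
  then show ?thesis by (simp add: fps_X_power_mult_nth nth_0)
qed

lemma const_smult_one_right [simp]: "br F (fps_const (sm c 1)) = 0"
proof -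
  have "fps_const (sm c 1) = fps_sm sm (fps_const c) 1"
    by (rule fps_ext) (simp add: fps_sm_fps_const[OF k_algebra] k_algebra_smult_zero_right[OF k_algebra])
  then have "br F (fps_const (sm c 1)) = fps_sm sm (fps_const c) 0"
    by (simp add: smult_right)
  also have "\<dots> = 0"
    by (rule fps_ext) (simp add: fps_sm_fps_const[OF k_algebra] k_algebra_smult_zero_right[OF k_algebra])
  finally show ?thesis .
qed

lemma const_smult_one_mult_left: "br (fps_const (sm c 1) * F) G = fps_const (sm c 1) * br F G"
proof -
  have "br (fps_const (sm c 1) * F) G = - (fps_const (sm c 1) * br G F)"
    by (subst antisym) (simp add: leibniz)
  then show ?thesis
    by (subst antisym) simp
qed

end

section \<open>Exponentials of series of operators\<close>

lemma op_apply_nth: "op_apply X f $ n = (\<Sum>k\<le>n. X k (f $ (n - k)))"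
  unfolding op_apply_def by simp

lemma op_exp_nth: "op_exp sm X f $ n = (\<Sum>m\<le>n. sm (1 / fact m) (((op_apply X) ^^ m) f $ n))"
  unfolding op_exp_def by simp

lemma op_exp_nth_0: "k_algebra sm \<Longrightarrow> op_exp sm X f $ 0 = f $ 0"
  by (simp add: op_exp_nth k_algebra_smult_one)

lemma op_apply_power_nth_eq_0:
  assumes "X 0 = (\<lambda>_. 0)" and "\<And>k. X k 0 = 0" and "k < m"
  shows "((op_apply X) ^^ m) f $ k = 0"
  using assms(3)
proof (induction m arbitrary: k)
  case (Suc m)
  have "X j (((op_apply X) ^^ m) f $ (k - j)) = 0" if "j \<le> k" for j
    using Suc that assms(1,2) by (cases "j = 0") auto
  then show ?case by (simp add: op_apply_nth)
qed simp

lemma op_apply_power_nth_cong: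
  assumes "\<And>j. j \<le> N \<Longrightarrow> X j = Y j" and "k \<le> N"
  shows "((op_apply X) ^^ m) f $ k = ((op_apply Y) ^^ m) f $ k"
  using assms(2) by (induction m arbitrary: k) (simp_all add: op_apply_nth assms(1))

lemma op_exp_nth_cong:
  assumes "\<And>j. j \<le> N \<Longrightarrow> X j = Y j" and "k \<le> N"
  shows "op_exp sm X f $ k = op_exp sm Y f $ k"
  using op_apply_power_nth_cong[OF assms] by (simp add: op_exp_nth)

lemma op_apply_update_nth:
  fixes X :: "nat \<Rightarrow> 'b::ab_group_add \<Rightarrow> 'b"
  shows "op_apply (X(N := Z)) f $ N = op_apply X f $ N - X N (f $ 0) + Z (f $ 0)"
  by (simp add: op_apply_nth atMost_Suc flip: lessThan_Suc_atMost)

locale additive_op_series =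
  fixes X :: "nat \<Rightarrow> 'b::comm_ring_1 \<Rightarrow> 'b"
  assumes constant_term: "X 0 = (\<lambda>_. 0)"
    and additive: "\<And>k x y. X k (x + y) = X k x + X k y"
begin

lemma map_zero [simp]: "X k 0 = 0"
  using additive[of k 0 0] by simp

lemma map_sum: "X k (sum g A) = (\<Sum>a\<in>A. X k (g a))"
  by (induction A rule: infinite_finite_induct) (simp_all add: additive)

lemma op_apply_add: "op_apply X (f + g) = op_apply X f + op_apply X g"
  by (rule fps_ext) (simp add: op_apply_nth additive sum.distrib)

lemma op_apply_zero [simp]: "op_apply X 0 = 0"
  using op_apply_add[of 0 0] by simp

lemma op_apply_sum: "op_apply X (sum h A) = (\<Sum>a\<in>A. op_apply X (h a))"
  by (induction A rule: infinite_finite_induct) (simp_all add: op_apply_add)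

lemma op_apply_of_nat_mult: "op_apply X (of_nat c * f) = of_nat c * op_apply X f"
  by (induction c) (simp_all add: op_apply_add distrib_right)

lemma op_apply_power_add:
  "((op_apply X) ^^ m) (f + g) = ((op_apply X) ^^ m) f + ((op_apply X) ^^ m) g"
  by (induction m) (simp_all add: op_apply_add)

lemma op_apply_fps_X_mult: "op_apply X (fps_X * f) = fps_X * op_apply X f"
proof (rule fps_ext)
  fix n
  show "op_apply X (fps_X * f) $ n = (fps_X * op_apply X f) $ n"
  proof (cases n)
    case (Suc n')
    have "op_apply X (fps_X * f) $ n = (\<Sum>k\<le>n'. X k (f $ (n' - k))) + X (Suc n') 0"
      unfolding Suc op_apply_nth sum.atMost_Suc
      by (intro arg_cong2[where f="(+)"] sum.cong refl) (auto simp: Suc_diff_le)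
    then show ?thesis by (simp add: Suc op_apply_nth)
  qed (simp add: op_apply_nth constant_term)
qed

lemma op_apply_power_fps_X_mult: "((op_apply X) ^^ m) (fps_X * f) = fps_X * ((op_apply X) ^^ m) f"
  by (induction m) (simp_all add: op_apply_fps_X_mult)

lemma op_exp_add: "k_algebra sm \<Longrightarrow> op_exp sm X (f + g) = op_exp sm X f + op_exp sm X g"
  by (rule fps_ext) (simp add: op_exp_nth op_apply_power_add k_algebra_smult_add_right sum.distrib)

lemma op_exp_fps_X_mult:
  assumes "k_algebra sm"
  shows "op_exp sm X (fps_X * f) = fps_X * op_exp sm X f"
proof (rule fps_ext)
  fix n
  have "((op_apply X) ^^ n) f $ (n - 1) = 0" if "n > 0"
    using op_apply_power_nth_eq_0[where X=X, OF constant_term map_zero] that by simp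
  then show "op_exp sm X (fps_X * f) $ n = (fps_X * op_exp sm X f) $ n"
    using assms
    by (cases n) (simp_all add: op_exp_nth op_apply_power_fps_X_mult k_algebra_smult_zero_right)
qed

lemma op_exp_nth_eq_mult:
  "k_algebra sm \<Longrightarrow> op_exp sm X f $ n = (\<Sum>m\<le>n. sm (1 / fact m) 1 * (((op_apply X) ^^ m) f $ n))"
  unfolding op_exp_nth by (subst k_algebra_smult_eq_mult) simp_all

lemma op_exp_nth_eq_partial_sum:
  assumes "k_algebra sm" and "p \<le> n"
  shows "op_exp sm X f $ p = (\<Sum>m\<le>n. fps_const (sm (1 / fact m) 1) * ((op_apply X) ^^ m) f) $ p"
proof -
  have "(\<Sum>m\<le>n. fps_const (sm (1 / fact m) 1) * ((op_apply X) ^^ m) f) $ p =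
      (\<Sum>m\<le>p. sm (1 / fact m) 1 * (((op_apply X) ^^ m) f $ p))"
    unfolding fps_sum_nth fps_mult_left_const_nth
    by (rule sum.mono_neutral_right)
      (use assms(2) op_apply_power_nth_eq_0[where X=X, OF constant_term map_zero] in auto)
  then show ?thesis
    by (simp add: op_exp_nth_eq_mult[OF assms(1)])
qed

text \<open>Higher powers of \<open>X\<close> reach \<open>\<lambda>\<^sup>N\<close> through \<open>X\<^sub>N\<close> only together with further factors
  \<open>X\<^sub>j\<close>, \<open>j \<ge> 1\<close>, which push the result beyond order \<open>N\<close>.\<close>
lemma op_apply_power_update_nth:
  assumes "Z 0 = 0" and "0 < N" and "2 \<le> m"
  shows "((op_apply (X(N := Z))) ^^ m) f $ N = ((op_apply X) ^^ m) f $ N"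
proof -
  let ?Y = "X(N := Z)"
  have Y_0: "?Y 0 = (\<lambda>_. 0)" and Y_zero: "?Y k 0 = 0" for k
    using assms(1,2) constant_term by auto
  obtain m' where m': "m = Suc m'" "0 < m'"
    using assms(3) by (cases m) auto
  have "?Y j (((op_apply ?Y) ^^ m') f $ (N - j)) = X j (((op_apply X) ^^ m') f $ (N - j))"
    if "j \<le> N" for j
  proof -
    consider "j = 0" | "j = N" | "0 < j" "j < N"
      using \<open>j \<le> N\<close> by linarith
    then show ?thesis
    proof cases
      case 2
      then show ?thesis
        using op_apply_power_nth_eq_0[where X="?Y", OF Y_0 Y_zero] op_apply_power_nth_eq_0[where X=X, OF constant_term map_zero]
          m'(2) assms(1) by simp
    next
      case 3
      have "((op_apply ?Y) ^^ m') f $ (N - j) = ((op_apply X) ^^ m') f $ (N - j)"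
        by (rule op_apply_power_nth_cong[of "N - 1"]) (use 3 in auto)
      then show ?thesis using 3 by simp
    qed (use assms(2) constant_term in simp)
  qed
  then show ?thesis using m'(1) by (simp add: op_apply_nth)
qed

lemma op_exp_update_nth:
  assumes "k_algebra sm" and "Z 0 = 0" and "0 < N"
  shows "op_exp sm (X(N := Z)) f $ N = op_exp sm X f $ N - X N (f $ 0) + Z (f $ 0)"
proof -
  let ?t = "\<lambda>X m. sm (1 / fact m) (((op_apply X) ^^ m) f $ N)"
  have split: "op_exp sm Y f $ N = ?t Y 1 + (\<Sum>m\<in>{..N} - {1}. ?t Y m)" for Y
    unfolding op_exp_nth using assms(3) by (subst sum.remove[of _ 1]) auto
  have "?t (X(N := Z)) m = ?t X m" if "m \<in> {..N} - {1}" for m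
    using that op_apply_power_update_nth[where Z=Z and N=N, OF assms(2,3)] by (cases "m = 0") auto
  then have "(\<Sum>m\<in>{..N} - {1}. ?t (X(N := Z)) m) = (\<Sum>m\<in>{..N} - {1}. ?t X m)"
    by (rule sum.cong[OF refl])
  then show ?thesis
    unfolding split[of X] split[of "X(N := Z)"]
    by (simp add: k_algebra_smult_one[OF assms(1)] op_apply_update_nth)
qed

lemma op_exp_update_nth_le:
  assumes "k_algebra sm" and "Z 0 = 0" and "0 < N" and "X N = (\<lambda>_. 0)" and "j \<le> N"
  shows "op_exp sm (X(N := Z)) f $ j = (op_exp sm X f + fps_X ^ N * fps_const (Z (f $ 0))) $ j"
proof (cases "j = N")
  case True
  then show ?thesis
    using op_exp_update_nth[where Z=Z and N=N, OF assms(1-3)] assms(4) by (simp add: fps_X_power_mult_nth)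
next
  case False
  have "op_exp sm (X(N := Z)) f $ j = op_exp sm X f $ j"
    by (rule op_exp_nth_cong[of "N - 1"]) (use False assms(3,5) in auto)
  then show ?thesis
    using False assms(5) by (simp add: fps_X_power_mult_nth)
qed

end

lemma sum_atMost_triangle_swap:
  fixes h :: "nat \<Rightarrow> nat \<Rightarrow> 'a::comm_monoid_add"
  shows "(\<Sum>k\<le>n. \<Sum>i\<le>n - k. h k i) = (\<Sum>i\<le>n. \<Sum>k\<le>n - i. h k i)"
proof -
  have "(\<Sum>k\<le>n. \<Sum>i\<le>n - k. h k i) = (\<Sum>k\<le>n. \<Sum>i | i \<in> {..n} \<and> k + i \<le> n. h k i)"
    by (intro sum.cong) auto
  also have "\<dots> = (\<Sum>i\<le>n. \<Sum>k | k \<in> {..n} \<and> k + i \<le> n. h k i)"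
    by (rule sum.swap_restrict) auto
  also have "\<dots> = (\<Sum>i\<le>n. \<Sum>k\<le>n - i. h k i)"
    by (intro sum.cong) auto
  finally show ?thesis .
qed

locale derivation_series = additive_op_series +
  assumes leibniz: "\<And>k x y. X k (x * y) = x * X k y + y * X k x"
begin

lemma op_apply_mult: "op_apply X (f * g) = f * op_apply X g + g * op_apply X f"
proof (rule fps_ext)
  fix n
  have half: "(f * op_apply X g) $ n = (\<Sum>k\<le>n. \<Sum>i\<le>n - k. f $ i * X k (g $ (n - k - i)))"
    for f g
  proof -
    have "(f * op_apply X g) $ n = (\<Sum>i\<le>n. \<Sum>k\<le>n - i. f $ i * X k (g $ (n - i - k)))"
      by (simp add: op_apply_nth fps_mult_nth atMost_atLeast0[symmetric] sum_distrib_left)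
    also have "\<dots> = (\<Sum>k\<le>n. \<Sum>i\<le>n - k. f $ i * X k (g $ (n - i - k)))"
      by (rule sum_atMost_triangle_swap[symmetric])
    finally show ?thesis
      by (simp add: add.commute)
  qed
  have reverse: "(\<Sum>i\<le>n - k. g $ (n - k - i) * X k (f $ i)) = (\<Sum>i\<le>n - k. g $ i * X k (f $ (n - k - i)))"
    for k
  proof -
    have "(\<Sum>i\<le>n - k. g $ i * X k (f $ (n - k - i))) =
        (\<Sum>i\<le>n - k. g $ (n - k - i) * X k (f $ (n - k - (n - k - i))))"
      using sum.atLeastAtMost_rev[of "\<lambda>i. g $ i * X k (f $ (n - k - i))" 0 "n - k"]
      by (simp only: atMost_atLeast0 add_0_right)
    also have "\<dots> = (\<Sum>i\<le>n - k. g $ (n - k - i) * X k (f $ i))"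
      by (intro sum.cong refl) (simp only: atMost_iff diff_diff_cancel)
    finally show ?thesis ..
  qed
  have "op_apply X (f * g) $ n =
      (\<Sum>k\<le>n. \<Sum>i\<le>n - k. f $ i * X k (g $ (n - k - i))) +
      (\<Sum>k\<le>n. \<Sum>i\<le>n - k. g $ (n - k - i) * X k (f $ i))"
    by (simp add: op_apply_nth fps_mult_nth atMost_atLeast0[symmetric] map_sum leibniz sum.distrib)
  also have "\<dots> = (f * op_apply X g) $ n + (g * op_apply X f) $ n"
    by (simp only: half reverse)
  finally show "op_apply X (f * g) $ n = (f * op_apply X g + g * op_apply X f) $ n"
    by simp
qed

lemma op_apply_power_mult:
  "((op_apply X) ^^ m) (f * g) =
     (\<Sum>i\<le>m. of_nat (m choose i) * (((op_apply X) ^^ i) f * ((op_apply X) ^^ (m - i)) g))"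
proof (induction m)
  case (Suc m)
  let ?F = "\<lambda>i. ((op_apply X) ^^ i) f" and ?G = "\<lambda>i. ((op_apply X) ^^ i) g"
  have "((op_apply X) ^^ Suc m) (f * g) =
      (\<Sum>i\<le>m. of_nat (m choose i) * op_apply X (?F i * ?G (m - i)))"
    by (simp add: Suc op_apply_sum op_apply_of_nat_mult)
  also have "\<dots> = (\<Sum>i\<le>m. of_nat (m choose i) * (?F (Suc i) * ?G (m - i))) +
      (\<Sum>i\<le>Suc m. of_nat (m choose i) * (?F i * ?G (Suc m - i)))"
    by (simp add: op_apply_mult Suc_diff_le binomial_eq_0 sum.distrib algebra_simps)
  also have "\<dots> = (\<Sum>i\<le>Suc m. of_nat (Suc m choose i) * (?F i * ?G (Suc m - i)))"
    unfolding sum.atMost_Suc_shift[of _ m] by (simp add: sum.distrib distrib_right add_ac)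
  finally show ?case .
qed simp

lemma op_exp_mult:
  fixes sm :: "'k::field_char_0 \<Rightarrow> _"
  assumes "k_algebra sm"
  shows "op_exp sm X (f * g) = op_exp sm X f * op_exp sm X g"
proof (rule fps_ext)
  fix n
  define c where "c m = sm (1 / fact m) 1" for m
  let ?F = "\<lambda>i. ((op_apply X) ^^ i) f" and ?G = "\<lambda>i. ((op_apply X) ^^ i) g"
  define P where "P i j = c i * c j * (?F i * ?G j) $ n" for i j
  have P_eq_0: "P i j = 0" if "n < i + j" for i j
    unfolding P_def
    using fps_mult_nth_eq_0[of i "?F i" j "?G j" n] that
      op_apply_power_nth_eq_0[where X=X, OF constant_term map_zero] by simp
  have "(op_exp sm X f * op_exp sm X g) $ n =
      ((\<Sum>i\<le>n. fps_const (c i) * ?F i) * (\<Sum>j\<le>n. fps_const (c j) * ?G j)) $ n"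
    by (simp add: fps_mult_nth op_exp_nth_eq_partial_sum[OF assms, where n=n] c_def)
  also have "\<dots> = (\<Sum>(i, j)\<in>{..n} \<times> {..n}. P i j)"
    unfolding sum_product P_def fps_sum_nth by (simp add: mult_ac sum.cartesian_product)
  also have "\<dots> = (\<Sum>(i, j)\<in>{(i, j). i + j \<le> n}. P i j)"
    by (rule sum.mono_neutral_right) (auto, meson P_eq_0 not_le)
  also have "\<dots> = (\<Sum>m\<le>n. \<Sum>i\<le>m. P i (m - i))"
    by (rule sum.triangle_reindex_eq)
  also have "\<dots> = (\<Sum>m\<le>n. c m * (\<Sum>i\<le>m. of_nat (m choose i) * (?F i * ?G (m - i)) $ n))"
    unfolding sum_distrib_left P_def
    by (intro sum.cong refl)
      (simp add: k_algebra_smult_inverse_fact_binomial[OF assms] c_def flip: mult.assoc)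
  also have "\<dots> = op_exp sm X (f * g) $ n"
    unfolding op_exp_nth_eq_mult[OF assms] op_apply_power_mult fps_sum_nth c_def
    by (simp add: fps_of_nat[symmetric])
  finally show "op_exp sm X (f * g) $ n = (op_exp sm X f * op_exp sm X g) $ n" ..
qed

lemma op_exp_fps_const:
  assumes "k_algebra sm" and "\<And>k. X k b = 0"
  shows "op_exp sm X (fps_const b) = fps_const b"
proof -
  have "op_apply X (fps_const b) = 0"
    by (rule fps_ext) (auto simp: op_apply_nth assms(2) intro!: sum.neutral)
  then have "((op_apply X) ^^ Suc m) (fps_const b) = 0" for m
    by (induction m) (simp_all add: fps_ext op_apply_nth)
  then have "((op_apply X) ^^ m) (fps_const b) = (if m = 0 then fps_const b else 0)" for m
    by (cases m) auto
  then show ?thesis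
    by (intro fps_ext) (simp add: op_exp_nth sum.atMost_shift k_algebra_smult_zero_right[OF assms(1)]
        k_algebra_smult_one[OF assms(1)])
qed

end

lemma derivation_add: "derivation sm D \<Longrightarrow> D (x + y) = D x + D y"
  and derivation_mult: "derivation sm D \<Longrightarrow> D (x * y) = x * D y + y * D x"
  and derivation_smult: "derivation sm D \<Longrightarrow> D (sm c x) = sm c (D x)"
  unfolding derivation_def k_linear_def by blast+

lemma derivation_zero: "k_algebra sm \<Longrightarrow> derivation sm (\<lambda>_. 0)"
  unfolding derivation_def k_linear_def by (simp add: k_algebra_smult_zero_right)

lemma derivation_smult_one: "k_algebra sm \<Longrightarrow> derivation sm D \<Longrightarrow> D (sm c 1) = 0"
  using derivation_smult[of sm D c 1] derivation_mult[of sm D 1 1]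
  by (simp add: k_algebra_smult_zero_right)

lemma derivation_seriesI:
  assumes "X 0 = (\<lambda>_. 0)" and "\<And>k. derivation sm (X k)"
  shows "derivation_series X"
  by unfold_locales (use assms derivation_add derivation_mult in blast)+

lemma CE1_der_mult_left:
  assumes "k_algebra smB" and "D \<in> CE1_der smA smB \<phi>"
  shows "(\<lambda>a. b * D a) \<in> CE1_der smA smB \<phi>"
  using assms(2) unfolding CE1_der_def k_linear_def
  by (auto simp: distrib_left k_algebra_smult_eq_mult[OF assms(1), of _ "b * _"]
      k_algebra_smult_eq_mult[OF assms(1), of _ "D _"] algebra_simps)

section \<open>Lifting the Poisson commutant order by order\<close>

locale deformed_poisson_morphism =
  \<sigma>: fps_poisson_deformation smB \<sigma> \<sigma>0
  for smB :: "'k::field_char_0 \<Rightarrow> 'b::comm_ring_1 \<Rightarrow> 'b"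
    and \<sigma> :: "'b fps \<Rightarrow> 'b fps \<Rightarrow> 'b fps" and \<sigma>0 :: "'b \<Rightarrow> 'b \<Rightarrow> 'b" +
  fixes smA :: "'k \<Rightarrow> 'a::comm_ring_1 \<Rightarrow> 'a"
    and \<pi>0 :: "'a \<Rightarrow> 'a \<Rightarrow> 'a" and \<phi>0 :: "'a \<Rightarrow> 'b"
    and \<pi> :: "'a fps \<Rightarrow> 'a fps \<Rightarrow> 'a fps" and \<Phi> :: "'a fps \<Rightarrow> 'b fps"
  assumes k_algebra_A: "k_algebra smA"
    and poisson_\<sigma>0: "poisson_bracket smB \<sigma>0"
    and \<pi>_nth_0_const: "\<And>a b. \<pi> (fps_const a) (fps_const b) $ 0 = \<pi>0 a b"
    and \<Phi>_morphism: "poisson_morphism (fps_sm smA) (fps_sm smB) \<pi> \<sigma> \<Phi>"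
    and \<Phi>_nth_0_const: "\<And>a. \<Phi> (fps_const a) $ 0 = \<phi>0 a"
begin

abbreviation commutant :: "'b set" where
  "commutant \<equiv> poisson_commutant \<sigma>0 \<phi>0"

lemma \<sigma>0_add_right: "\<sigma>0 z (x + y) = \<sigma>0 z x + \<sigma>0 z y"
  and \<sigma>0_smult_right: "\<sigma>0 z (smB c x) = smB c (\<sigma>0 z x)"
  and \<sigma>0_leibniz: "\<sigma>0 z (x * y) = \<sigma>0 z x * y + x * \<sigma>0 z y"
  using poisson_\<sigma>0 unfolding poisson_bracket_def k_bilinear_def k_linear_def by blast+

lemma commutant_add: "x \<in> commutant \<Longrightarrow> y \<in> commutant \<Longrightarrow> x + y \<in> commutant"
  and commutant_mult: "x \<in> commutant \<Longrightarrow> y \<in> commutant \<Longrightarrow> x * y \<in> commutant"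
  and commutant_smult: "x \<in> commutant \<Longrightarrow> smB c x \<in> commutant"
  unfolding poisson_commutant_def
  by (simp_all add: \<sigma>0_add_right \<sigma>0_leibniz \<sigma>0_smult_right k_algebra_smult_zero_right[OF \<sigma>.k_algebra])

lemma commutant_one: "1 \<in> commutant"
  unfolding poisson_commutant_def using \<sigma>0_leibniz[of _ 1 1] by simp

lemma \<Phi>_add: "\<Phi> (f + g) = \<Phi> f + \<Phi> g"
  and \<Phi>_smult: "\<Phi> (fps_sm smA c f) = fps_sm smB c (\<Phi> f)"
  and \<Phi>_mult: "\<Phi> (f * g) = \<Phi> f * \<Phi> g"
  and \<Phi>_bracket: "\<Phi> (\<pi> f g) = \<sigma> (\<Phi> f) (\<Phi> g)"
  using \<Phi>_morphism unfolding poisson_morphism_def k_linear_def by blast+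

lemma \<Phi>_fps_X_mult: "\<Phi> (fps_X * f) = fps_X * \<Phi> f"
  using \<Phi>_smult[of "fps_X ^ 1" f]
  unfolding fps_sm_fps_X_power[OF k_algebra_A] fps_sm_fps_X_power[OF \<sigma>.k_algebra] by simp

lemma \<Phi>_eq_const_plus_X_mult_shift: "\<Phi> f = \<Phi> (fps_const (f $ 0)) + fps_X * \<Phi> (fps_shift 1 f)"
  by (metis \<Phi>_add \<Phi>_fps_X_mult fps_eq_const_plus_X_mult_shift)

lemma \<Phi>_nth_0: "\<Phi> f $ 0 = \<phi>0 (f $ 0)"
  by (subst \<Phi>_eq_const_plus_X_mult_shift) (simp add: \<Phi>_nth_0_const)

lemma bracket_\<Phi>_nth_eq_0:
  assumes "\<And>a k. k < N \<Longrightarrow> \<sigma> F (\<Phi> (fps_const a)) $ k = 0" and "k < N"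
  shows "\<sigma> F (\<Phi> g) $ k = 0"
  using assms
proof (induction N arbitrary: g k)
  case (Suc N)
  have "\<sigma> F (\<Phi> g) = \<sigma> F (\<Phi> (fps_const (g $ 0))) + fps_X * \<sigma> F (\<Phi> (fps_shift 1 g))"
    by (subst \<Phi>_eq_const_plus_X_mult_shift) (simp add: \<sigma>.add_right \<sigma>.X_mult_right)
  then show ?case
    using Suc by (cases k) auto
qed simp

definition obstruction :: "(nat \<Rightarrow> 'b \<Rightarrow> 'b) \<Rightarrow> nat \<Rightarrow> 'b \<Rightarrow> 'a \<Rightarrow> 'b" where
  "obstruction Y n x a = \<sigma> (op_exp smB Y (fps_const x)) (\<Phi> (fps_const a)) $ Suc n"

definition commutes_upto :: "(nat \<Rightarrow> 'b \<Rightarrow> 'b) \<Rightarrow> nat \<Rightarrow> bool" where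
  "commutes_upto Y n \<longleftrightarrow>
     (\<forall>x\<in>commutant. \<forall>a k. k \<le> n \<longrightarrow> \<sigma> (op_exp smB Y (fps_const x)) (\<Phi> (fps_const a)) $ k = 0)"

lemma commutes_upto_0: "commutes_upto Y 0"
proof -
  have "\<sigma> (op_exp smB Y (fps_const x)) (\<Phi> (fps_const a)) $ 0 = - \<sigma>0 (\<phi>0 a) x" for x a
    by (simp add: \<sigma>.nth_0 op_exp_nth_0[OF \<sigma>.k_algebra] \<Phi>_nth_0 flip: \<sigma>.br0_antisym)
  then show ?thesis
    unfolding commutes_upto_def poisson_commutant_def by simp
qed

lemma commutes_upto_Suc_iff:
  "commutes_upto Y (Suc n) \<longleftrightarrow> commutes_upto Y n \<and> (\<forall>x\<in>commutant. \<forall>a. obstruction Y n x a = 0)"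
  unfolding commutes_upto_def obstruction_def by (auto simp: le_Suc_eq)

lemma commutes_upto_update: "commutes_upto (Y(Suc n := Z)) n \<longleftrightarrow> commutes_upto Y n"
proof -
  have "op_exp smB (Y(Suc n := Z)) f $ j = op_exp smB Y f $ j" if "j \<le> k" "k \<le> n" for f j k
    by (rule op_exp_nth_cong[of n]) (use that in auto)
  then have "\<sigma> (op_exp smB (Y(Suc n := Z)) f) G $ k = \<sigma> (op_exp smB Y f) G $ k" if "k \<le> n" for f G k
    using that by (intro \<sigma>.nth_cong_left) auto
  then show ?thesis
    unfolding commutes_upto_def by auto
qed

lemma obstruction_update:
  assumes "derivation_series Y" and "Y (Suc n) = (\<lambda>_. 0)" and "Z 0 = 0"
  shows "obstruction (Y(Suc n := Z)) n x a = obstruction Y n x a + \<sigma>0 (Z x) (\<phi>0 a)"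
proof -
  interpret Y: derivation_series Y by fact
  let ?F = "op_exp smB Y (fps_const x)" and ?G = "\<Phi> (fps_const a)"
  have "obstruction (Y(Suc n := Z)) n x a = \<sigma> (?F + fps_X ^ Suc n * fps_const (Z x)) ?G $ Suc n"
    unfolding obstruction_def
    using Y.op_exp_update_nth_le[where Z=Z and N="Suc n", OF \<sigma>.k_algebra assms(3) _ assms(2)]
    by (intro \<sigma>.nth_cong_left) simp
  also have "\<dots> = obstruction Y n x a + (fps_X ^ Suc n * \<sigma> (fps_const (Z x)) ?G) $ Suc n"
    by (simp only: obstruction_def \<sigma>.add_left \<sigma>.X_power_mult_left fps_add_nth)
  also have "\<dots> = obstruction Y n x a + \<sigma> (fps_const (Z x)) ?G $ 0"
    by (simp only: fps_X_power_mult_nth) simp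
  finally show ?thesis
    by (simp add: \<sigma>.nth_0 \<Phi>_nth_0)
qed

context
  fixes Y :: "nat \<Rightarrow> 'b \<Rightarrow> 'b" and n :: nat
  assumes Y_0: "Y 0 = (\<lambda>_. 0)"
    and Y_derivation: "\<And>k. derivation smB (Y k)"
    and Y_commutes: "commutes_upto Y n"
begin

interpretation Y: derivation_series Y
  by (rule derivation_seriesI[where X=Y, OF Y_0 Y_derivation])

abbreviation (input) exp_Y :: "'b \<Rightarrow> 'b fps" where
  "exp_Y x \<equiv> op_exp smB Y (fps_const x)"

lemma bracket_exp_\<Phi>_nth_eq_0:
  assumes "x \<in> commutant" and "k \<le> n"
  shows "\<sigma> (exp_Y x) (\<Phi> g) $ k = 0"
proof (rule bracket_\<Phi>_nth_eq_0)
  show "\<sigma> (exp_Y x) (\<Phi> (fps_const a)) $ j = 0" if "j < Suc n" for a j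
    using Y_commutes assms(1) that unfolding commutes_upto_def by simp
qed (use assms(2) in simp)

lemma obstruction_CE1_der:
  assumes x: "x \<in> commutant"
  shows "obstruction Y n x \<in> CE1_der smA smB \<phi>0"
proof -
  let ?F = "exp_Y x" and ?G = "\<lambda>a. \<Phi> (fps_const a)"
  have "obstruction Y n x (a + b) = obstruction Y n x a + obstruction Y n x b" for a b
    using \<Phi>_add[of "fps_const a" "fps_const b"] by (simp add: obstruction_def \<sigma>.add_right)
  moreover have "obstruction Y n x (smA c a) = smB c (obstruction Y n x a)" for c a
  proof -
    have "fps_const (smA c a) = fps_sm smA (fps_const c) (fps_const a)"
      by (rule fps_ext) (simp add: fps_sm_fps_const[OF k_algebra_A] k_algebra_smult_zero_right[OF k_algebra_A])
    then have "\<sigma> ?F (?G (smA c a)) = fps_sm smB (fps_const c) (\<sigma> ?F (?G a))"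
      by (simp only: \<Phi>_smult \<sigma>.smult_right)
    then show ?thesis
      by (simp add: obstruction_def fps_sm_fps_const[OF \<sigma>.k_algebra])
  qed
  moreover have "obstruction Y n x (a * b) = \<phi>0 a * obstruction Y n x b + \<phi>0 b * obstruction Y n x a" for a b
  proof -
    have "\<sigma> ?F (?G (a * b)) = \<sigma> ?F (?G a) * ?G b + ?G a * \<sigma> ?F (?G b)"
      using \<Phi>_mult[of "fps_const a" "fps_const b"] by (simp add: \<sigma>.leibniz)
    moreover have "(\<sigma> ?F (?G a) * ?G b) $ Suc n = \<sigma> ?F (?G a) $ Suc n * \<phi>0 b"
      using fps_mult_nth_Suc_eq_leading[of n "\<sigma> ?F (?G a)" "?G b"] bracket_exp_\<Phi>_nth_eq_0[OF x]
      by (simp add: \<Phi>_nth_0)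
    moreover have "(?G a * \<sigma> ?F (?G b)) $ Suc n = \<phi>0 a * \<sigma> ?F (?G b) $ Suc n"
      using fps_mult_nth_Suc_eq_leading[of n "\<sigma> ?F (?G b)" "?G a"] bracket_exp_\<Phi>_nth_eq_0[OF x]
      by (simp add: \<Phi>_nth_0 mult.commute)
    ultimately show ?thesis
      by (simp add: obstruction_def algebra_simps)
  qed
  ultimately show ?thesis
    unfolding CE1_der_def k_linear_def by blast
qed

text \<open>The cocycle condition is the \<open>\<lambda>\<^sup>n\<^sup>+\<^sup>1\<close>-coefficient of the Jacobi identity for
  \<open>exp(Y) x\<close>, \<open>\<Phi>(a\<^sub>0)\<close> and \<open>\<Phi>(a\<^sub>1)\<close>.\<close>
lemma obstruction_cocycle:
  assumes x: "x \<in> commutant"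
  shows "ce_delta1 \<pi>0 \<sigma>0 \<phi>0 (obstruction Y n x) = (\<lambda>_ _. 0)"
proof (intro ext)
  fix a0 a1
  let ?F = "exp_Y x" and ?G0 = "\<Phi> (fps_const a0)" and ?G1 = "\<Phi> (fps_const a1)"
  let ?D = "obstruction Y n x"
  have leading: "\<sigma> (\<Phi> (fps_const a)) (\<sigma> ?F (\<Phi> (fps_const b))) $ Suc n = \<sigma>0 (\<phi>0 a) (?D b)" for a b
    unfolding obstruction_def
    by (subst \<sigma>.nth_leading_right) (use bracket_exp_\<Phi>_nth_eq_0[OF x] in \<open>auto simp: \<Phi>_nth_0\<close>)
  have "\<sigma> ?G0 (\<sigma> ?G1 ?F) $ Suc n = - \<sigma>0 (\<phi>0 a0) (?D a1)"
    by (subst \<sigma>.antisym) (simp add: \<sigma>.minus_right leading)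
  moreover have "\<sigma> ?G1 (\<sigma> ?F ?G0) $ Suc n = \<sigma>0 (\<phi>0 a1) (?D a0)"
    by (rule leading)
  moreover have "\<sigma> ?F (\<sigma> ?G0 ?G1) $ Suc n = ?D (\<pi>0 a0 a1)"
  proof -
    let ?p = "\<pi> (fps_const a0) (fps_const a1)"
    have "\<sigma> ?G0 ?G1 = \<Phi> (fps_const (\<pi>0 a0 a1)) + fps_X * \<Phi> (fps_shift 1 ?p)"
      by (simp add: \<Phi>_eq_const_plus_X_mult_shift[of ?p] \<pi>_nth_0_const flip: \<Phi>_bracket)
    then show ?thesis
      using bracket_exp_\<Phi>_nth_eq_0[OF x, of n]
      by (simp add: obstruction_def \<sigma>.add_right \<sigma>.X_mult_right)
  qed
  moreover have "(\<sigma> ?G0 (\<sigma> ?G1 ?F) + \<sigma> ?G1 (\<sigma> ?F ?G0) + \<sigma> ?F (\<sigma> ?G0 ?G1)) $ Suc n = 0"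
    by (simp only: \<sigma>.jacobi) simp
  ultimately show "ce_delta1 \<pi>0 \<sigma>0 \<phi>0 ?D a0 a1 = 0"
    unfolding ce_delta1_def by (simp add: algebra_simps)
qed

lemma obstruction_add: "obstruction Y n (x + y) = (\<lambda>a. obstruction Y n x a + obstruction Y n y a)"
  unfolding obstruction_def
  by (simp add: Y.op_exp_add[OF \<sigma>.k_algebra] \<sigma>.add_left flip: fps_const_add)

lemma obstruction_smult: "obstruction Y n (smB c x) = (\<lambda>a. smB c 1 * obstruction Y n x a)"
proof -
  have "exp_Y (smB c x) = exp_Y (smB c 1 * x)"
    using k_algebra_smult_eq_mult[OF \<sigma>.k_algebra, of c x] by simp
  also have "\<dots> = fps_const (smB c 1) * exp_Y x"
    by (simp add: Y.op_exp_mult[OF \<sigma>.k_algebra]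
        Y.op_exp_fps_const[OF \<sigma>.k_algebra derivation_smult_one[OF \<sigma>.k_algebra Y_derivation]]
        flip: fps_const_mult)
  finally show ?thesis
    unfolding obstruction_def by (simp add: \<sigma>.const_smult_one_mult_left)
qed

lemma obstruction_mult:
  assumes x: "x \<in> commutant" and y: "y \<in> commutant"
  shows "obstruction Y n (x * y) = (\<lambda>a. x * obstruction Y n y a + y * obstruction Y n x a)"
proof
  fix a
  let ?G = "\<Phi> (fps_const a)"
  have "\<sigma> (exp_Y (x * y)) ?G = \<sigma> (exp_Y x) ?G * exp_Y y + exp_Y x * \<sigma> (exp_Y y) ?G"
    using \<sigma>.antisym[of ?G "exp_Y x"] \<sigma>.antisym[of ?G "exp_Y y"]
    by (subst \<sigma>.antisym) (simp add: Y.op_exp_mult[OF \<sigma>.k_algebra] \<sigma>.leibniz flip: fps_const_mult)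
  moreover have "(\<sigma> (exp_Y x) ?G * exp_Y y) $ Suc n = \<sigma> (exp_Y x) ?G $ Suc n * y"
    using fps_mult_nth_Suc_eq_leading[of n "\<sigma> (exp_Y x) ?G" "exp_Y y"] bracket_exp_\<Phi>_nth_eq_0[OF x]
    by (simp add: op_exp_nth_0[OF \<sigma>.k_algebra])
  moreover have "(exp_Y x * \<sigma> (exp_Y y) ?G) $ Suc n = x * \<sigma> (exp_Y y) ?G $ Suc n"
    using fps_mult_nth_Suc_eq_leading[of n "\<sigma> (exp_Y y) ?G" "exp_Y x"] bracket_exp_\<Phi>_nth_eq_0[OF y]
    by (simp add: op_exp_nth_0[OF \<sigma>.k_algebra] mult.commute)
  ultimately show "obstruction Y n (x * y) a = x * obstruction Y n y a + y * obstruction Y n x a"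
    unfolding obstruction_def by (simp add: algebra_simps)
qed

end

end

locale commutant_lifting = deformed_poisson_morphism +
  fixes \<phi>1 and hor
  assumes \<phi>1_add: "\<And>D E. D \<in> CE1_der smA smB \<phi>0 \<Longrightarrow> E \<in> CE1_der smA smB \<phi>0 \<Longrightarrow>
      \<phi>1 (\<lambda>a. D a + E a) = \<phi>1 D + \<phi>1 E"
    and \<phi>1_mult: "\<And>D b. D \<in> CE1_der smA smB \<phi>0 \<Longrightarrow> b \<in> poisson_commutant \<sigma>0 \<phi>0 \<Longrightarrow>
      \<phi>1 (\<lambda>a. b * D a) = b * \<phi>1 D"
    and \<phi>1_homotopy: "\<And>D. D \<in> CE1_der smA smB \<phi>0 \<Longrightarrow> ce_delta1 \<pi>0 \<sigma>0 \<phi>0 D = (\<lambda>_ _. 0) \<Longrightarrow>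
      D = ce_delta0 \<sigma>0 \<phi>0 (\<phi>1 D)"
    and hor_derivation: "\<And>D. D \<in> CE1_der_sub smB (poisson_commutant \<sigma>0 \<phi>0) \<Longrightarrow>
      derivation smB (hor D)"
    and hor_extends: "\<And>D x. D \<in> CE1_der_sub smB (poisson_commutant \<sigma>0 \<phi>0) \<Longrightarrow>
      x \<in> poisson_commutant \<sigma>0 \<phi>0 \<Longrightarrow> hor D x = D x"
begin

definition correction :: "(nat \<Rightarrow> 'b \<Rightarrow> 'b) \<Rightarrow> nat \<Rightarrow> 'b \<Rightarrow> 'b" where
  "correction Y n x = (if x \<in> commutant then \<phi>1 (obstruction Y n x) else 0)"

context
  fixes Y :: "nat \<Rightarrow> 'b \<Rightarrow> 'b" and n :: nat
  assumes Y_0: "Y 0 = (\<lambda>_. 0)"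
    and Y_derivation: "\<And>k. derivation smB (Y k)"
    and Y_commutes: "commutes_upto Y n"
begin

lemma obstruction_eq_coboundary:
  assumes x: "x \<in> commutant"
  shows "obstruction Y n x a = \<sigma>0 (\<phi>0 a) (correction Y n x)"
proof -
  have "obstruction Y n x = ce_delta0 \<sigma>0 \<phi>0 (\<phi>1 (obstruction Y n x))"
    by (rule \<phi>1_homotopy) (use obstruction_CE1_der obstruction_cocycle Y_0 Y_derivation Y_commutes x in auto)
  from fun_cong[OF this, of a] show ?thesis
    using x by (simp only: correction_def ce_delta0_def if_True)
qed

lemma correction_CE1_der_sub: "correction Y n \<in> CE1_der_sub smB commutant"
proof -
  have D: "obstruction Y n x \<in> CE1_der smA smB \<phi>0" if "x \<in> commutant" for x
    by (rule obstruction_CE1_der[OF Y_0 Y_derivation Y_commutes that])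
  have "correction Y n (x + y) = correction Y n x + correction Y n y"
    if "x \<in> commutant" "y \<in> commutant" for x y
    using that \<phi>1_add[OF D D]
    by (simp add: correction_def commutant_add obstruction_add[OF Y_0 Y_derivation Y_commutes])
  moreover have "correction Y n (smB c x) = smB c (correction Y n x)" if "x \<in> commutant" for c x
    using that \<phi>1_mult[OF D commutant_smult[OF commutant_one]]
    by (simp add: correction_def commutant_smult obstruction_smult[OF Y_0 Y_derivation Y_commutes]
        k_algebra_smult_eq_mult[OF \<sigma>.k_algebra, of c "\<phi>1 _"])
  moreover have "correction Y n (x * y) = x * correction Y n y + y * correction Y n x"
    if "x \<in> commutant" "y \<in> commutant" for x y
  proof -
    have "\<phi>1 (obstruction Y n (x * y)) =
        \<phi>1 (\<lambda>a. x * obstruction Y n y a) + \<phi>1 (\<lambda>a. y * obstruction Y n x a)"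
      using that \<phi>1_add[OF CE1_der_mult_left CE1_der_mult_left, OF \<sigma>.k_algebra D \<sigma>.k_algebra D]
      by (simp add: obstruction_mult[OF Y_0 Y_derivation Y_commutes])
    then show ?thesis
      using that by (simp add: correction_def commutant_mult \<phi>1_mult[OF D])
  qed
  ultimately show ?thesis
    unfolding CE1_der_sub_def by (auto simp: correction_def)
qed

lemma commutes_upto_Suc_corrected:
  assumes "Y (Suc n) = (\<lambda>_. 0)"
  shows "commutes_upto (Y(Suc n := hor (correction Y n))) (Suc n)"
proof -
  let ?Z = "hor (correction Y n)"
  have "?Z 0 = 0"
    using derivation_add[OF hor_derivation[OF correction_CE1_der_sub], of 0 0] by simp
  have "obstruction (Y(Suc n := ?Z)) n x a = 0" if x: "x \<in> commutant" for x a
  proof -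
    have "obstruction (Y(Suc n := ?Z)) n x a = obstruction Y n x a + \<sigma>0 (?Z x) (\<phi>0 a)"
      by (rule obstruction_update[where Z="?Z", OF derivation_seriesI[where X=Y, OF Y_0 Y_derivation] assms \<open>?Z 0 = 0\<close>])
    also have "\<dots> = \<sigma>0 (\<phi>0 a) (correction Y n x) + \<sigma>0 (correction Y n x) (\<phi>0 a)"
      using x by (simp add: obstruction_eq_coboundary hor_extends[OF correction_CE1_der_sub])
    also have "\<dots> = 0"
      using \<sigma>.br0_antisym[of "correction Y n x"] by simp
    finally show ?thesis .
  qed
  then show ?thesis
    using Y_commutes by (simp add: commutes_upto_Suc_iff commutes_upto_update)
qed

end

primrec truncation :: "nat \<Rightarrow> nat \<Rightarrow> 'b \<Rightarrow> 'b" where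
  "truncation 0 = (\<lambda>_ _. 0)"
| "truncation (Suc n) = (truncation n)(Suc n := hor (correction (truncation n) n))"

lemma truncation_0: "truncation n 0 = (\<lambda>_. 0)"
  by (induction n) auto

lemma truncation_above: "n < j \<Longrightarrow> truncation n j = (\<lambda>_. 0)"
  by (induction n) auto

lemma truncation_stable: "j \<le> n \<Longrightarrow> truncation (n + d) j = truncation n j"
  by (induction d) auto

lemma truncation_derivation_commutes:
  "(\<forall>k. derivation smB (truncation n k)) \<and> commutes_upto (truncation n) n"
proof (induction n)
  case 0
  show ?case
    by (simp add: derivation_zero[OF \<sigma>.k_algebra] commutes_upto_0)
next
  case (Suc n)
  then have "\<forall>k. derivation smB (truncation (Suc n) k)"
    using hor_derivation[OF correction_CE1_der_sub[where Y="truncation n" and n=n, OF truncation_0]] by simp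
  moreover have "commutes_upto (truncation (Suc n)) (Suc n)"
    using commutes_upto_Suc_corrected[where Y="truncation n" and n=n, OF truncation_0] Suc truncation_above[of n "Suc n"] by simp
  ultimately show ?case ..
qed

definition generator :: "nat \<Rightarrow> 'b \<Rightarrow> 'b" where
  "generator k = truncation k k"

lemma generator_eq_truncation: "j \<le> n \<Longrightarrow> generator j = truncation n j"
  unfolding generator_def using truncation_stable[of j j "n - j"] by simp

lemma generator_0: "generator 0 = (\<lambda>_. 0)"
  by (simp add: generator_def truncation_0)

lemma generator_derivation: "derivation smB (generator k)"
  using truncation_derivation_commutes[of k] by (simp add: generator_def)

lemma generator_commutes_const:
  assumes "x \<in> commutant"
  shows "\<sigma> (op_exp smB generator (fps_const x)) (\<Phi> g) $ k = 0"
proof -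
  have "op_exp smB generator (fps_const x) $ j = op_exp smB (truncation k) (fps_const x) $ j"
    if "j \<le> k" for j
    by (rule op_exp_nth_cong[of k]) (use that generator_eq_truncation in auto)
  then have "\<sigma> (op_exp smB generator (fps_const x)) (\<Phi> g) $ k =
      \<sigma> (op_exp smB (truncation k) (fps_const x)) (\<Phi> g) $ k"
    by (rule \<sigma>.nth_cong_left)
  also have "\<dots> = 0"
    using truncation_derivation_commutes[of k]
    by (intro bracket_exp_\<Phi>_nth_eq_0[where Y="truncation k" and n=k, OF truncation_0] assms) auto
  finally show ?thesis .
qed

lemma generator_commutes:
  assumes "\<And>n. f $ n \<in> commutant"
  shows "\<sigma> (op_exp smB generator f) (\<Phi> g) = 0"
proof -
  interpret generator: derivation_series generator
    by (rule derivation_seriesI[where X=generator, OF generator_0 generator_derivation])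
  have decomp: "\<sigma> (op_exp smB generator f) (\<Phi> g) =
      \<sigma> (op_exp smB generator (fps_const (f $ 0))) (\<Phi> g) +
      fps_X * \<sigma> (op_exp smB generator (fps_shift 1 f)) (\<Phi> g)" for f
  proof -
    have "op_exp smB generator f =
        op_exp smB generator (fps_const (f $ 0)) + fps_X * op_exp smB generator (fps_shift 1 f)"
      using fps_eq_const_plus_X_mult_shift[of f] generator.op_exp_add[OF \<sigma>.k_algebra]
        generator.op_exp_fps_X_mult[OF \<sigma>.k_algebra] by metis
    then show ?thesis
      by (simp add: \<sigma>.add_left \<sigma>.X_mult_left)
  qed
  have "\<sigma> (op_exp smB generator f) (\<Phi> g) $ k = 0" if "\<forall>n. f $ n \<in> commutant" for f k
    using that
  proof (induction k arbitrary: f)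
    case 0
    then show ?case
      by (subst decomp) (simp add: generator_commutes_const)
  next
    case (Suc k)
    then show ?case
      by (subst decomp) (simp add: generator_commutes_const)
  qed
  then show ?thesis
    using assms by (intro fps_ext) simp
qed

end

theorem proposition3p12:
  fixes smA :: "'k::field_char_0 \<Rightarrow> 'a::comm_ring_1 \<Rightarrow> 'a"
    and smB :: "'k \<Rightarrow> 'b::comm_ring_1 \<Rightarrow> 'b"
    and \<pi>0 :: "'a \<Rightarrow> 'a \<Rightarrow> 'a" and \<sigma>0 :: "'b \<Rightarrow> 'b \<Rightarrow> 'b" and \<phi>0 :: "'a \<Rightarrow> 'b"
    and \<pi> :: "'a fps \<Rightarrow> 'a fps \<Rightarrow> 'a fps" and \<sigma> :: "'b fps \<Rightarrow> 'b fps \<Rightarrow> 'b fps"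
    and \<Phi> :: "'a fps \<Rightarrow> 'b fps"
    and \<phi>1 :: "('a \<Rightarrow> 'b) \<Rightarrow> 'b"
    and hor :: "('b \<Rightarrow> 'b) \<Rightarrow> ('b \<Rightarrow> 'b)"
  defines "A' \<equiv> poisson_commutant \<sigma>0 \<phi>0"
  assumes algA: "k_algebra smA" and algB: "k_algebra smB"
    and pA: "poisson_bracket smA \<pi>0" and pB: "poisson_bracket smB \<sigma>0"
    and m0: "poisson_morphism smA smB \<pi>0 \<sigma>0 \<phi>0"
    and pi_def: "poisson_bracket (fps_sm smA) \<pi>"
    and pi_0: "\<forall>a b. fps_nth (\<pi> (fps_const a) (fps_const b)) 0 = \<pi>0 a b"
    and sigma_def: "poisson_bracket (fps_sm smB) \<sigma>"
    and sigma_0: "\<forall>a b. fps_nth (\<sigma> (fps_const a) (fps_const b)) 0 = \<sigma>0 a b"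
    and Phi_mor: "poisson_morphism (fps_sm smA) (fps_sm smB) \<pi> \<sigma> \<Phi>"
    and Phi_0: "\<forall>a. fps_nth (\<Phi> (fps_const a)) 0 = \<phi>0 a"
    and h1_add: "\<forall>D\<in>CE1_der smA smB \<phi>0. \<forall>E\<in>CE1_der smA smB \<phi>0.
                   \<phi>1 (\<lambda>x. D x + E x) = \<phi>1 D + \<phi>1 E"
    and h1_mult: "\<forall>D\<in>CE1_der smA smB \<phi>0. \<forall>b\<in>A'. \<phi>1 (\<lambda>x. b * D x) = b * \<phi>1 D"
    and h1_homot: "\<forall>D\<in>CE1_der smA smB \<phi>0.
                     ce_delta1 \<pi>0 \<sigma>0 \<phi>0 D = (\<lambda>_ _. 0) \<longrightarrow> D = ce_delta0 \<sigma>0 \<phi>0 (\<phi>1 D)"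
    and h2_der: "\<forall>D\<in>CE1_der_sub smB A'. derivation smB (hor D)"
    and h2_add: "\<forall>D\<in>CE1_der_sub smB A'. \<forall>E\<in>CE1_der_sub smB A'.
                   hor (\<lambda>x. D x + E x) = (\<lambda>y. hor D y + hor E y)"
    and h2_mult: "\<forall>D\<in>CE1_der_sub smB A'. \<forall>b\<in>A'. hor (\<lambda>x. b * D x) = (\<lambda>y. b * hor D y)"
    and h2_ext: "\<forall>D\<in>CE1_der_sub smB A'. \<forall>a'\<in>A'. hor D a' = D a'"
  shows "\<exists>X :: nat \<Rightarrow> 'b \<Rightarrow> 'b. X 0 = (\<lambda>_. 0) \<and> (\<forall>k. derivation smB (X k)) \<and>
           (\<forall>f g. (\<forall>n. fps_nth f n \<in> A') \<longrightarrow> \<sigma> (op_exp smB X f) (\<Phi> g) = 0)"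
proof -
  interpret commutant_lifting smB \<sigma> \<sigma>0 smA \<pi>0 \<phi>0 \<pi> \<Phi> \<phi>1 hor
    by unfold_locales
      (use algA algB pB sigma_def sigma_0 pi_0 Phi_mor Phi_0 h1_add h1_mult h1_homot h2_der h2_ext
        in \<open>simp_all add: A'_def\<close>)
  show ?thesis
    using generator_0 generator_derivation generator_commutes unfolding A'_def by blast
qed

end
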